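(* Let $n\geq 3$ be an integer, let $\varphi : X \to X$ be a morphism in $\mathscr{C}$, and let $\kappa : K \to X$ be a kernel of $\varphi$. Then $\varphi$ has a core inverse if and only if $\varphi$ has a cokernel $\lambda : X \to L$ such that both $\kappa\lambda : K\to L$ and $\varphi^{*}\varphi^{n}+\kappa^{*}\kappa : X\to X$ are invertible. In this case $$\varphi^{\mathrm{core}}=\varphi^{n-1}(\varphi^{*}\varphi^{n}+\kappa^{*}\kappa)^{-1}\varphi^{*}.$$
   Context: $\mathscr{C}$ is an additive category with an involution $*$: a map on morphisms sending $\varphi : X\to Y$ to $\varphi^* : Y \to X$ such that $(\varphi^* )^*=\varphi$, $(\varphi\psi)^*=\psi^*\varphi^*$ and $(\varphi+\phi)^*=\varphi^*+\phi^*$. Composition is written left to right: for $\varphi : X\to Y$ and $\psi : Y\to Z$, $\varphi\psi : X \to Z$ means "first $\varphi$, then $\psi$". A kernel of $\varphi : X\to Y$ is a morphism $\kappa : K\to X$ with $\kappa\varphi=0$ such that every $\alpha : M\to X$ with $\alpha\varphi=0$ factors uniquely as $\alpha=\alpha'\kappa$. A cokernel of $\varphi$ is a morphism $\lambda : Y\to L$ with $\varphi\lambda=0$ such that every $\beta : Y\to M$ with $\varphi\beta=0$ factors uniquely as $\beta=\lambda\beta'$. A morphism is invertible if it has a two-sided inverse. For $\varphi : X\to X$, a core inverse of $\varphi$ is a morphism $\chi : X\to X$ with $(\varphi\chi)^*=\varphi\chi$, $\varphi\chi^2=\chi$ and $\chi\varphi^2=\varphi$. It is unique when it exists and is denoted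 $\varphi^{\mathrm{core}}$. *)

theory Defs
  imports Main
begin

text \<open>Composition comp f g is written left to
  right: first f, then g (as in the paper).\<close>

record ('o, 'm) invcat =
  obj    :: "'o set"
  hom    :: "'o \<Rightarrow> 'o \<Rightarrow> 'm set"
  comp   :: "'m \<Rightarrow> 'm \<Rightarrow> 'm"
  ident  :: "'o \<Rightarrow> 'm"
  zero_m :: "'o \<Rightarrow> 'o \<Rightarrow> 'm"
  plus_m :: "'m \<Rightarrow> 'm \<Rightarrow> 'm"
  neg_m  :: "'m \<Rightarrow> 'm"
  star_m :: "'m \<Rightarrow> 'm"

definition is_category :: "('o, 'm, 'x) invcat_scheme \<Rightarrow> bool" where
  "is_category C \<longleftrightarrow>
     (\<forall>A B. (A \<notin> obj C \<or> B \<notin> obj C) \<longrightarrow> hom C A B = {}) \<and>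
     (\<forall>A B A' B'. hom C A B \<inter> hom C A' B' \<noteq> {} \<longrightarrow> A = A' \<and> B = B') \<and>
     (\<forall>A\<in>obj C. ident C A \<in> hom C A A) \<and>
     (\<forall>A B D f g. f \<in> hom C A B \<longrightarrow> g \<in> hom C B D \<longrightarrow> comp C f g \<in> hom C A D) \<and>
     (\<forall>A B D E f g h. f \<in> hom C A B \<longrightarrow> g \<in> hom C B D \<longrightarrow> h \<in> hom C D E \<longrightarrow>
        comp C (comp C f g) h = comp C f (comp C g h)) \<and>
     (\<forall>A B f. f \<in> hom C A B \<longrightarrow> comp C (ident C A) f = f \<and> comp C f (ident C B) = f)"

definition is_preadditive :: "('o, 'm, 'x) invcat_scheme \<Rightarrow> bool" where
  "is_preadditive C \<longleftrightarrow> is_category C \<and>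
     (\<forall>A\<in>obj C. \<forall>B\<in>obj C.
        zero_m C A B \<in> hom C A B \<and>
        (\<forall>f\<in>hom C A B. \<forall>g\<in>hom C A B. plus_m C f g \<in> hom C A B) \<and>
        (\<forall>f\<in>hom C A B. neg_m C f \<in> hom C A B) \<and>
        (\<forall>f\<in>hom C A B. \<forall>g\<in>hom C A B. \<forall>h\<in>hom C A B.
            plus_m C (plus_m C f g) h = plus_m C f (plus_m C g h)) \<and>
        (\<forall>f\<in>hom C A B. \<forall>g\<in>hom C A B. plus_m C f g = plus_m C g f) \<and>
        (\<forall>f\<in>hom C A B. plus_m C (zero_m C A B) f = f) \<and>
        (\<forall>f\<in>hom C A B. plus_m C (neg_m C f) f = zero_m C A B)) \<and>
     (\<forall>A B D f g h. f \<in> hom C A B \<longrightarrow> g \<in> hom C A B \<longrightarrow> h \<in> hom C B D \<longrightarrow>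
        comp C (plus_m C f g) h = plus_m C (comp C f h) (comp C g h)) \<and>
     (\<forall>A B D f g h. f \<in> hom C A B \<longrightarrow> g \<in> hom C B D \<longrightarrow> h \<in> hom C B D \<longrightarrow>
        comp C f (plus_m C g h) = plus_m C (comp C f g) (comp C f h))"

definition is_additive :: "('o, 'm, 'x) invcat_scheme \<Rightarrow> bool" where
  "is_additive C \<longleftrightarrow> is_preadditive C \<and>
     (\<exists>Z\<in>obj C. ident C Z = zero_m C Z Z) \<and>
     (\<forall>A\<in>obj C. \<forall>B\<in>obj C. \<exists>P\<in>obj C.
        \<exists>i1\<in>hom C A P. \<exists>i2\<in>hom C B P. \<exists>p1\<in>hom C P A. \<exists>p2\<in>hom C P B.
          comp C i1 p1 = ident C A \<and> comp C i2 p2 = ident C B \<and>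
          comp C i1 p2 = zero_m C A B \<and> comp C i2 p1 = zero_m C B A \<and>
          plus_m C (comp C p1 i1) (comp C p2 i2) = ident C P)"

definition is_additive_invcat :: "('o, 'm, 'x) invcat_scheme \<Rightarrow> bool" where
  "is_additive_invcat C \<longleftrightarrow> is_additive C \<and>
     (\<forall>A B f. f \<in> hom C A B \<longrightarrow> star_m C f \<in> hom C B A \<and> star_m C (star_m C f) = f) \<and>
     (\<forall>A B D f g. f \<in> hom C A B \<longrightarrow> g \<in> hom C B D \<longrightarrow>
        star_m C (comp C f g) = comp C (star_m C g) (star_m C f)) \<and>
     (\<forall>A B f g. f \<in> hom C A B \<longrightarrow> g \<in> hom C A B \<longrightarrow>
        star_m C (plus_m C f g) = plus_m C (star_m C f) (star_m C g))"

definition is_kernel :: "('o, 'm, 'x) invcat_scheme \<Rightarrow> 'o \<Rightarrow> 'o \<Rightarrow> 'm \<Rightarrow> 'o \<Rightarrow> 'm \<Rightarrow> bool" where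
  "is_kernel C X Y \<phi> K \<kappa> \<longleftrightarrow> \<kappa> \<in> hom C K X \<and> comp C \<kappa> \<phi> = zero_m C K Y \<and>
     (\<forall>M\<in>obj C. \<forall>\<alpha>\<in>hom C M X. comp C \<alpha> \<phi> = zero_m C M Y \<longrightarrow>
        (\<exists>!\<alpha>'. \<alpha>' \<in> hom C M K \<and> \<alpha> = comp C \<alpha>' \<kappa>))"

definition is_cokernel :: "('o, 'm, 'x) invcat_scheme \<Rightarrow> 'o \<Rightarrow> 'o \<Rightarrow> 'm \<Rightarrow> 'o \<Rightarrow> 'm \<Rightarrow> bool" where
  "is_cokernel C X Y \<phi> L lm \<longleftrightarrow> lm \<in> hom C Y L \<and> comp C \<phi> lm = zero_m C X L \<and>
     (\<forall>M\<in>obj C. \<forall>\<beta>\<in>hom C Y M. comp C \<phi> \<beta> = zero_m C X M \<longrightarrow>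
        (\<exists>!\<beta>'. \<beta>' \<in> hom C L M \<and> \<beta> = comp C lm \<beta>'))"

definition is_inverse :: "('o, 'm, 'x) invcat_scheme \<Rightarrow> 'o \<Rightarrow> 'o \<Rightarrow> 'm \<Rightarrow> 'm \<Rightarrow> bool" where
  "is_inverse C A B f g \<longleftrightarrow> f \<in> hom C A B \<and> g \<in> hom C B A \<and>
     comp C f g = ident C A \<and> comp C g f = ident C B"

definition invertible :: "('o, 'm, 'x) invcat_scheme \<Rightarrow> 'o \<Rightarrow> 'o \<Rightarrow> 'm \<Rightarrow> bool" where
  "invertible C A B f \<longleftrightarrow> (\<exists>g. is_inverse C A B f g)"

definition inverse_m :: "('o, 'm, 'x) invcat_scheme \<Rightarrow> 'o \<Rightarrow> 'o \<Rightarrow> 'm \<Rightarrow> 'm" where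
  "inverse_m C A B f = (THE g. is_inverse C A B f g)"

fun mpow :: "('o, 'm, 'x) invcat_scheme \<Rightarrow> 'o \<Rightarrow> 'm \<Rightarrow> nat \<Rightarrow> 'm" where
  "mpow C X f 0 = ident C X"
| "mpow C X f (Suc k) = comp C (mpow C X f k) f"

definition is_core_inverse :: "('o, 'm, 'x) invcat_scheme \<Rightarrow> 'o \<Rightarrow> 'm \<Rightarrow> 'm \<Rightarrow> bool" where
  "is_core_inverse C X \<phi> \<chi> \<longleftrightarrow> \<chi> \<in> hom C X X \<and>
     star_m C (comp C \<phi> \<chi>) = comp C \<phi> \<chi> \<and>
     comp C \<phi> (comp C \<chi> \<chi>) = \<chi> \<and>
     comp C \<chi> (comp C \<phi> \<phi>) = \<phi>"

definition has_core_inverse :: "('o, 'm, 'x) invcat_scheme \<Rightarrow> 'o \<Rightarrow> 'm \<Rightarrow> bool" where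
  "has_core_inverse C X \<phi> \<longleftrightarrow> (\<exists>\<chi>. is_core_inverse C X \<phi> \<chi>)"

definition core_inverse :: "('o, 'm, 'x) invcat_scheme \<Rightarrow> 'o \<Rightarrow> 'm \<Rightarrow> 'm" where
  "core_inverse C X \<phi> = (THE \<chi>. is_core_inverse C X \<phi> \<chi>)"

end

theory Submission
  imports Defs
begin

(* If \<chi> is a core inverse of \<phi>, then 1 - \<chi>\<phi> annihilates \<phi>, so it factors as \<rho>\<kappa> through the
   kernel; this \<rho> is a cokernel of \<phi> with \<kappa>\<rho> = 1, and \<phi>*\<phi>^n + \<kappa>*\<kappa> has the explicit inverse
   \<chi>^n \<chi>* + \<rho>\<rho>*.  Conversely, if \<kappa>\<lambda> is invertible then \<phi> and \<lambda> are jointly left cancellable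
   (a morphism killing both factors through \<kappa>, and the factor vanishes because \<kappa>\<lambda> is
   right invertible).  With v the inverse of
   \<phi>*\<phi>^n + \<kappa>*\<kappa> and \<chi> = \<phi>^(n-1) v \<phi>*, this cancellation shows \<phi>\<chi>\<phi> = \<phi>, whence \<phi>\<chi> is a
   hermitian idempotent, and the remaining core-inverse identities follow in the same way. *)

locale preadditive_involution =
  fixes C :: "('o, 'm, 'x) invcat_scheme"
  assumes preadditive: "is_preadditive C"
    and star_in_hom: "f \<in> hom C A B \<Longrightarrow> star_m C f \<in> hom C B A"
    and star_star_hom: "f \<in> hom C A B \<Longrightarrow> star_m C (star_m C f) = f"
    and star_comp_hom: "\<lbrakk>f \<in> hom C A B; g \<in> hom C B D\<rbrakk> \<Longrightarrow>
      star_m C (comp C f g) = comp C (star_m C g) (star_m C f)"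
    and star_plus_hom: "\<lbrakk>f \<in> hom C A B; g \<in> hom C A B\<rbrakk> \<Longrightarrow>
      star_m C (plus_m C f g) = plus_m C (star_m C f) (star_m C g)"

lemma additive_invcat_preadditive_involution:
  assumes "is_additive_invcat C"
  shows "preadditive_involution C"
  using assms unfolding preadditive_involution_def is_additive_invcat_def is_additive_def
  by blast

context preadditive_involution
begin

abbreviation mcomp (infixr "\<cdot>" 80) where "f \<cdot> g \<equiv> comp C f g"
abbreviation madd (infixl "\<oplus>" 65) where "f \<oplus> g \<equiv> plus_m C f g"
abbreviation msub (infixl "\<ominus>" 65) where "f \<ominus> g \<equiv> plus_m C f (neg_m C g)"
abbreviation adjoint ("_\<^sup>\<dagger>" [1000] 1000) where "f\<^sup>\<dagger> \<equiv> star_m C f"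

lemma category: "is_category C"
  using preadditive unfolding is_preadditive_def by blast

definition arr :: "'m \<Rightarrow> bool" where "arr f \<longleftrightarrow> (\<exists>A B. f \<in> hom C A B)"
definition src :: "'m \<Rightarrow> 'o" where "src f = (THE A. \<exists>B. f \<in> hom C A B)"
definition tgt :: "'m \<Rightarrow> 'o" where "tgt f = (THE B. \<exists>A. f \<in> hom C A B)"

lemma hom_unique: "f \<in> hom C A B \<Longrightarrow> f \<in> hom C A' B' \<Longrightarrow> A = A' \<and> B = B'"
  using category unfolding is_category_def by (elim conjE) blast

lemma hom_objects: "f \<in> hom C A B \<Longrightarrow> A \<in> obj C \<and> B \<in> obj C"
  using category unfolding is_category_def by (elim conjE) blast

lemma in_homD:
  assumes "f \<in> hom C A B"
  shows "arr f" "src f = A" "tgt f = B"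
  using assms hom_unique unfolding arr_def src_def tgt_def by blast+

lemma arr_in_hom: "arr f \<Longrightarrow> f \<in> hom C (src f) (tgt f)"
  using in_homD arr_def by metis

lemma arr_objects [simp]: "arr f \<Longrightarrow> src f \<in> obj C" "arr f \<Longrightarrow> tgt f \<in> obj C"
  using arr_in_hom hom_objects by blast+

lemma comp_arr [simp]:
  assumes "arr f" "arr g" "tgt f = src g"
  shows "arr (f \<cdot> g)" "src (f \<cdot> g) = src f" "tgt (f \<cdot> g) = tgt g"
proof -
  have "f \<cdot> g \<in> hom C (src f) (tgt g)"
    using category assms arr_in_hom unfolding is_category_def by (elim conjE) metis
  then show "arr (f \<cdot> g)" "src (f \<cdot> g) = src f" "tgt (f \<cdot> g) = tgt g"
    by (simp_all add: in_homD)
qed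

lemma comp_assoc [simp]:
  assumes "arr f" "arr g" "arr h" "tgt f = src g" "tgt g = src h"
  shows "(f \<cdot> g) \<cdot> h = f \<cdot> (g \<cdot> h)"
  using category assms arr_in_hom unfolding is_category_def by (elim conjE) metis

lemma ident_arr [simp]:
  assumes "A \<in> obj C"
  shows "arr (ident C A)" "src (ident C A) = A" "tgt (ident C A) = A"
  using category assms in_homD unfolding is_category_def by (elim conjE, metis)+

lemma comp_ident [simp]:
  "arr f \<Longrightarrow> src f = A \<Longrightarrow> ident C A \<cdot> f = f"
  "arr f \<Longrightarrow> tgt f = B \<Longrightarrow> f \<cdot> ident C B = f"
  using category arr_in_hom unfolding is_category_def by (elim conjE, metis)+

(* Products are normalised to right-nested form by simp, so an equation f \<cdot> g = h is only usable
   as a rewrite rule in the extended form f \<cdot> g \<cdot> x = h \<cdot> x. *)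
lemma comp_reassoc:
  assumes "f \<cdot> g = h" "arr f" "arr g" "arr x" "tgt f = src g" "tgt g = src x"
  shows "f \<cdot> g \<cdot> x = h \<cdot> x"
  using assms by (metis comp_assoc)

lemma comp3_reassoc:
  assumes "f \<cdot> g \<cdot> h = r" "arr f" "arr g" "arr h" "arr x"
    "tgt f = src g" "tgt g = src h" "tgt h = src x"
  shows "f \<cdot> g \<cdot> h \<cdot> x = r \<cdot> x"
  using assms by (metis comp_arr comp_assoc)

lemma hom_abelian_group:
  assumes "A \<in> obj C" "B \<in> obj C"
  shows "zero_m C A B \<in> hom C A B"
    and "\<lbrakk>f \<in> hom C A B; g \<in> hom C A B\<rbrakk> \<Longrightarrow> f \<oplus> g \<in> hom C A B"
    and "f \<in> hom C A B \<Longrightarrow> neg_m C f \<in> hom C A B"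
    and "\<lbrakk>f \<in> hom C A B; g \<in> hom C A B; h \<in> hom C A B\<rbrakk> \<Longrightarrow> f \<oplus> g \<oplus> h = f \<oplus> (g \<oplus> h)"
    and "\<lbrakk>f \<in> hom C A B; g \<in> hom C A B\<rbrakk> \<Longrightarrow> f \<oplus> g = g \<oplus> f"
    and "f \<in> hom C A B \<Longrightarrow> zero_m C A B \<oplus> f = f"
    and "f \<in> hom C A B \<Longrightarrow> neg_m C f \<oplus> f = zero_m C A B"
  using preadditive assms unfolding is_preadditive_def by (elim conjE; simp)+

lemma zero_arr [simp]:
  assumes "A \<in> obj C" "B \<in> obj C"
  shows "arr (zero_m C A B)" "src (zero_m C A B) = A" "tgt (zero_m C A B) = B"
  using hom_abelian_group(1)[OF assms] by (simp_all add: in_homD)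

lemma plus_arr [simp]:
  assumes "arr f" "arr g" "src f = src g" "tgt f = tgt g"
  shows "arr (f \<oplus> g)" "src (f \<oplus> g) = src f" "tgt (f \<oplus> g) = tgt f"
proof -
  have "f \<oplus> g \<in> hom C (src f) (tgt f)"
    using hom_abelian_group(2) assms arr_in_hom by (metis arr_objects)
  then show "arr (f \<oplus> g)" "src (f \<oplus> g) = src f" "tgt (f \<oplus> g) = tgt f"
    by (simp_all add: in_homD)
qed

lemma neg_arr [simp]:
  assumes "arr f"
  shows "arr (neg_m C f)" "src (neg_m C f) = src f" "tgt (neg_m C f) = tgt f"
proof -
  have "neg_m C f \<in> hom C (src f) (tgt f)"
    using hom_abelian_group(3) assms arr_in_hom by (metis arr_objects)
  then show "arr (neg_m C f)" "src (neg_m C f) = src f" "tgt (neg_m C f) = tgt f"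
    by (simp_all add: in_homD)
qed

lemma plus_assoc:
  assumes "arr f" "arr g" "arr h" "src f = src g" "tgt f = tgt g" "src f = src h" "tgt f = tgt h"
  shows "f \<oplus> g \<oplus> h = f \<oplus> (g \<oplus> h)"
  using hom_abelian_group(4) assms arr_in_hom by (metis arr_objects)

lemma plus_comm:
  assumes "arr f" "arr g" "src f = src g" "tgt f = tgt g"
  shows "f \<oplus> g = g \<oplus> f"
  using hom_abelian_group(5) assms arr_in_hom by (metis arr_objects)

lemma zero_plus [simp]: "arr f \<Longrightarrow> src f = A \<Longrightarrow> tgt f = B \<Longrightarrow> zero_m C A B \<oplus> f = f"
  using hom_abelian_group(6) arr_in_hom arr_objects by metis

lemma plus_zero [simp]: "arr f \<Longrightarrow> src f = A \<Longrightarrow> tgt f = B \<Longrightarrow> f \<oplus> zero_m C A B = f"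
  using zero_plus plus_comm by (metis zero_arr arr_objects)

lemma neg_plus [simp]: "arr f \<Longrightarrow> src f = A \<Longrightarrow> tgt f = B \<Longrightarrow> neg_m C f \<oplus> f = zero_m C A B"
  using hom_abelian_group(7) arr_in_hom arr_objects by metis

lemma plus_neg [simp]: "arr f \<Longrightarrow> src f = A \<Longrightarrow> tgt f = B \<Longrightarrow> f \<ominus> f = zero_m C A B"
  using neg_plus plus_comm neg_arr by metis

lemma plus_comp [simp]:
  assumes "arr f" "arr g" "arr h" "src f = src g" "tgt f = tgt g" "tgt f = src h"
  shows "(f \<oplus> g) \<cdot> h = f \<cdot> h \<oplus> g \<cdot> h"
  using preadditive assms arr_in_hom unfolding is_preadditive_def by (elim conjE) metis

lemma comp_plus [simp]:
  assumes "arr f" "arr g" "arr h" "src g = src h" "tgt g = tgt h" "tgt f = src g"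
  shows "f \<cdot> (g \<oplus> h) = f \<cdot> g \<oplus> f \<cdot> h"
  using preadditive assms arr_in_hom unfolding is_preadditive_def by (elim conjE) metis

lemma diff_zero_imp_eq:
  assumes "arr f" "arr g" "src f = src g" "tgt f = tgt g" "f \<ominus> g = zero_m C (src g) (tgt g)"
  shows "f = g"
proof -
  have "g = (f \<ominus> g) \<oplus> g" using assms by simp
  also have "\<dots> = f \<oplus> (neg_m C g \<oplus> g)" using assms(1-4) by (simp add: plus_assoc)
  also have "\<dots> = f" using assms by simp
  finally show ?thesis by (rule sym)
qed

lemma neg_unique:
  assumes "arr f" "arr g" "src f = src g" "tgt f = tgt g" "f \<oplus> g = zero_m C (src g) (tgt g)"
  shows "f = neg_m C g"
proof -
  have "neg_m C g = (f \<oplus> g) \<ominus> g" using assms by simp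
  also have "\<dots> = f \<oplus> (g \<ominus> g)" using assms(1-4) by (simp add: plus_assoc)
  also have "\<dots> = f" using assms by simp
  finally show ?thesis by (rule sym)
qed

lemma idempotent_plus_zero:
  assumes "arr z" "z \<oplus> z = z"
  shows "z = zero_m C (src z) (tgt z)"
proof -
  have "zero_m C (src z) (tgt z) = (z \<oplus> z) \<ominus> z" using assms by simp
  also have "\<dots> = z \<oplus> (z \<ominus> z)" using assms(1) by (simp add: plus_assoc)
  also have "\<dots> = z" using assms by simp
  finally show ?thesis by (rule sym)
qed

lemma zero_comp [simp]:
  assumes "arr f" "src f = B" "A \<in> obj C"
  shows "zero_m C A B \<cdot> f = zero_m C A (tgt f)"
proof -
  let ?z = "zero_m C A B \<cdot> f"
  have B: "B \<in> obj C" using assms by auto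
  have "?z \<oplus> ?z = (zero_m C A B \<oplus> zero_m C A B) \<cdot> f"
    by (rule plus_comp[symmetric]) (use assms B in simp_all)
  also have "\<dots> = ?z" using assms B by simp
  finally show ?thesis using idempotent_plus_zero[of ?z] assms B by simp
qed

lemma comp_zero [simp]:
  assumes "arr f" "tgt f = A" "B \<in> obj C"
  shows "f \<cdot> zero_m C A B = zero_m C (src f) B"
proof -
  let ?z = "f \<cdot> zero_m C A B"
  have A: "A \<in> obj C" using assms by auto
  have "?z \<oplus> ?z = f \<cdot> (zero_m C A B \<oplus> zero_m C A B)"
    by (rule comp_plus[symmetric]) (use assms A in simp_all)
  also have "\<dots> = ?z" using assms A by simp
  finally show ?thesis using idempotent_plus_zero[of ?z] assms A by simp
qed

lemma neg_comp [simp]: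
  assumes "arr f" "arr g" "tgt f = src g"
  shows "neg_m C f \<cdot> g = neg_m C (f \<cdot> g)"
proof (rule neg_unique)
  have "neg_m C f \<cdot> g \<oplus> f \<cdot> g = (neg_m C f \<oplus> f) \<cdot> g"
    by (rule plus_comp[symmetric]) (use assms in simp_all)
  then show "neg_m C f \<cdot> g \<oplus> f \<cdot> g = zero_m C (src (f \<cdot> g)) (tgt (f \<cdot> g))"
    using assms by simp
qed (use assms in simp_all)

lemma comp_neg [simp]:
  assumes "arr f" "arr g" "tgt f = src g"
  shows "f \<cdot> neg_m C g = neg_m C (f \<cdot> g)"
proof (rule neg_unique)
  have "f \<cdot> neg_m C g \<oplus> f \<cdot> g = f \<cdot> (neg_m C g \<oplus> g)"
    by (rule comp_plus[symmetric]) (use assms in simp_all)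
  then show "f \<cdot> neg_m C g \<oplus> f \<cdot> g = zero_m C (src (f \<cdot> g)) (tgt (f \<cdot> g))"
    using assms by simp
qed (use assms in simp_all)

lemma neg_zero [simp]: "A \<in> obj C \<Longrightarrow> B \<in> obj C \<Longrightarrow> neg_m C (zero_m C A B) = zero_m C A B"
  using neg_unique[of "zero_m C A B" "zero_m C A B"] by simp

lemma star_arr [simp]:
  assumes "arr f"
  shows "arr (f\<^sup>\<dagger>)" "src (f\<^sup>\<dagger>) = tgt f" "tgt (f\<^sup>\<dagger>) = src f" "f\<^sup>\<dagger>\<^sup>\<dagger> = f"
  using star_in_hom star_star_hom in_homD arr_in_hom[OF assms] by metis+

lemma star_comp [simp]: "arr f \<Longrightarrow> arr g \<Longrightarrow> tgt f = src g \<Longrightarrow> (f \<cdot> g)\<^sup>\<dagger> = g\<^sup>\<dagger> \<cdot> f\<^sup>\<dagger>"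
  using star_comp_hom arr_in_hom by metis

lemma star_plus [simp]:
  "arr f \<Longrightarrow> arr g \<Longrightarrow> src f = src g \<Longrightarrow> tgt f = tgt g \<Longrightarrow> (f \<oplus> g)\<^sup>\<dagger> = f\<^sup>\<dagger> \<oplus> g\<^sup>\<dagger>"
  using star_plus_hom arr_in_hom by metis

lemma star_zero [simp]:
  assumes "A \<in> obj C" "B \<in> obj C"
  shows "(zero_m C A B)\<^sup>\<dagger> = zero_m C B A"
proof -
  let ?z = "(zero_m C A B)\<^sup>\<dagger>"
  have "?z \<oplus> ?z = (zero_m C A B \<oplus> zero_m C A B)\<^sup>\<dagger>"
    by (rule star_plus[symmetric]) (use assms in simp_all)
  also have "\<dots> = ?z" using assms by simp
  finally show ?thesis using idempotent_plus_zero[of ?z] assms by simp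
qed

lemma star_ident [simp]:
  assumes "A \<in> obj C"
  shows "(ident C A)\<^sup>\<dagger> = ident C A"
proof -
  let ?i = "ident C A"
  have i: "?i\<^sup>\<dagger> = ?i \<cdot> ?i\<^sup>\<dagger>" using assms by simp
  have "?i = ?i\<^sup>\<dagger>\<^sup>\<dagger>" using assms by simp
  also have "\<dots> = (?i \<cdot> ?i\<^sup>\<dagger>)\<^sup>\<dagger>" using i by (rule arg_cong)
  also have "\<dots> = ?i\<^sup>\<dagger>\<^sup>\<dagger> \<cdot> ?i\<^sup>\<dagger>" by (rule star_comp) (use assms in simp_all)
  also have "\<dots> = ?i\<^sup>\<dagger>" using assms by simp
  finally show ?thesis by (rule sym)
qed

lemma mpow_arr [simp]:
  assumes "arr f" "src f = X" "tgt f = X"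
  shows "arr (mpow C X f j)" "src (mpow C X f j) = X" "tgt (mpow C X f j) = X"
proof -
  have "arr (mpow C X f j) \<and> src (mpow C X f j) = X \<and> tgt (mpow C X f j) = X"
    using assms by (induction j) auto
  then show "arr (mpow C X f j)" "src (mpow C X f j) = X" "tgt (mpow C X f j) = X"
    by blast+
qed

lemma mpow_commute:
  assumes "arr f" "src f = X" "tgt f = X"
  shows "f \<cdot> mpow C X f j = mpow C X f j \<cdot> f"
proof (induction j)
  case (Suc j)
  then show ?case using assms by (simp del: comp_assoc add: comp_assoc[symmetric])
qed (use assms in simp)

lemma mpow_Suc_left:
  assumes "arr f" "src f = X" "tgt f = X"
  shows "mpow C X f (Suc j) = f \<cdot> mpow C X f j"
  using mpow_commute[OF assms] by simp

lemma kernelD: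
  assumes "is_kernel C X Y \<phi> K \<kappa>"
  shows "arr \<kappa>" "src \<kappa> = K" "tgt \<kappa> = X" "\<kappa> \<cdot> \<phi> = zero_m C K Y"
  using assms in_homD unfolding is_kernel_def by auto

lemma kernel_factor:
  assumes "is_kernel C X Y \<phi> K \<kappa>" "arr \<alpha>" "tgt \<alpha> = X" "\<alpha> \<cdot> \<phi> = zero_m C (src \<alpha>) Y"
  obtains w where "arr w" "src w = src \<alpha>" "tgt w = K" "\<alpha> = w \<cdot> \<kappa>"
proof -
  have "\<alpha> \<in> hom C (src \<alpha>) X" using assms arr_in_hom by metis
  then obtain w where "w \<in> hom C (src \<alpha>) K" "\<alpha> = w \<cdot> \<kappa>"
    using assms unfolding is_kernel_def by (meson arr_objects(1))
  then show ?thesis using that in_homD by blast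
qed

lemma kernel_cancel:
  assumes "is_kernel C X Y \<phi> K \<kappa>" "\<phi> \<in> hom C X Y"
    and "arr \<alpha>" "arr \<beta>" "src \<alpha> = src \<beta>" "tgt \<alpha> = K" "tgt \<beta> = K" "\<alpha> \<cdot> \<kappa> = \<beta> \<cdot> \<kappa>"
  shows "\<alpha> = \<beta>"
proof -
  note \<kappa> = kernelD[OF assms(1)] and \<phi> = in_homD[OF assms(2)]
  have Y: "Y \<in> obj C" using \<phi> arr_objects by metis
  have "(\<alpha> \<cdot> \<kappa>) \<cdot> \<phi> = zero_m C (src \<alpha>) Y" using assms(3,6) \<kappa> \<phi> Y by simp
  moreover have "\<alpha> \<cdot> \<kappa> \<in> hom C (src \<alpha>) X" using assms(3,6) \<kappa> arr_in_hom by (metis comp_arr)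
  ultimately have "\<exists>!\<alpha>'. \<alpha>' \<in> hom C (src \<alpha>) K \<and> \<alpha> \<cdot> \<kappa> = \<alpha>' \<cdot> \<kappa>"
    using assms(1,3) unfolding is_kernel_def by simp
  moreover have "\<alpha> \<in> hom C (src \<alpha>) K" "\<beta> \<in> hom C (src \<alpha>) K"
    using assms(3-7) arr_in_hom by metis+
  ultimately show ?thesis using assms(8) by blast
qed

lemma inverse_unique:
  assumes "is_inverse C A B f g" "is_inverse C A B f g'"
  shows "g = g'"
proof -
  have f: "arr f" "src f = A" "tgt f = B" and g: "arr g" "src g = B" "tgt g = A"
    and g': "arr g'" "src g' = B" "tgt g' = A"
    and fg': "f \<cdot> g' = ident C A" and gf: "g \<cdot> f = ident C B"
    using assms in_homD unfolding is_inverse_def by auto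
  have "g = g \<cdot> f \<cdot> g'" using f g fg' by simp
  also have "\<dots> = (g \<cdot> f) \<cdot> g'" using f g g' by simp
  also have "\<dots> = g'" using g' gf by simp
  finally show ?thesis .
qed

lemma inverse_m_eqI: "is_inverse C A B f g \<Longrightarrow> inverse_m C A B f = g"
  unfolding inverse_m_def using inverse_unique by blast

lemma core_inverseD:
  assumes "\<phi> \<in> hom C X X" "is_core_inverse C X \<phi> \<chi>"
  shows "arr \<chi>" "src \<chi> = X" "tgt \<chi> = X"
    and "(\<phi> \<cdot> \<chi>)\<^sup>\<dagger> = \<phi> \<cdot> \<chi>" "\<phi> \<cdot> \<chi> \<cdot> \<chi> = \<chi>" "\<chi> \<cdot> \<phi> \<cdot> \<phi> = \<phi>"
    and "\<phi> \<cdot> \<chi> \<cdot> \<phi> = \<phi>" "\<chi> \<cdot> \<phi> \<cdot> \<chi> = \<chi>"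
proof -
  have \<phi>: "arr \<phi>" "src \<phi> = X" "tgt \<phi> = X" using assms(1) in_homD by auto
  show \<chi>: "arr \<chi>" "src \<chi> = X" "tgt \<chi> = X"
    using assms(2) in_homD unfolding is_core_inverse_def by auto
  show "(\<phi> \<cdot> \<chi>)\<^sup>\<dagger> = \<phi> \<cdot> \<chi>" and r: "\<phi> \<cdot> \<chi> \<cdot> \<chi> = \<chi>" and l: "\<chi> \<cdot> \<phi> \<cdot> \<phi> = \<phi>"
    using assms(2) unfolding is_core_inverse_def by auto
  have "\<phi> \<cdot> \<chi> \<cdot> \<phi> = \<phi> \<cdot> \<chi> \<cdot> \<chi> \<cdot> \<phi> \<cdot> \<phi>" unfolding l ..
  also have "\<dots> = (\<phi> \<cdot> \<chi> \<cdot> \<chi>) \<cdot> \<phi> \<cdot> \<phi>" using \<phi> \<chi> by simp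
  also have "\<dots> = \<phi>" unfolding r l ..
  finally show "\<phi> \<cdot> \<chi> \<cdot> \<phi> = \<phi>" .
  have "\<chi> \<cdot> \<phi> \<cdot> \<chi> = \<chi> \<cdot> \<phi> \<cdot> \<phi> \<cdot> \<chi> \<cdot> \<chi>" unfolding r ..
  also have "\<dots> = (\<chi> \<cdot> \<phi> \<cdot> \<phi>) \<cdot> \<chi> \<cdot> \<chi>" using \<phi> \<chi> by simp
  also have "\<dots> = \<chi>" unfolding r l ..
  finally show "\<chi> \<cdot> \<phi> \<cdot> \<chi> = \<chi>" .
qed

lemma core_inverse_unique:
  assumes "\<phi> \<in> hom C X X" "is_core_inverse C X \<phi> \<chi>" "is_core_inverse C X \<phi> \<chi>'"
  shows "\<chi> = \<chi>'"
proof -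
  have \<phi>: "arr \<phi>" "src \<phi> = X" "tgt \<phi> = X" using assms(1) in_homD by auto
  note c = core_inverseD[OF assms(1,2)] and c' = core_inverseD[OF assms(1,3)]
  have "(\<phi> \<cdot> \<chi>') \<cdot> (\<phi> \<cdot> \<chi>) = (\<phi> \<cdot> \<chi>' \<cdot> \<phi>) \<cdot> \<chi>" using \<phi> c(1-3) c'(1-3) by simp
  then have \<phi>\<chi>'\<phi>\<chi>: "(\<phi> \<cdot> \<chi>') \<cdot> (\<phi> \<cdot> \<chi>) = \<phi> \<cdot> \<chi>" unfolding c'(7) .
  have "(\<phi> \<cdot> \<chi>) \<cdot> (\<phi> \<cdot> \<chi>') = (\<phi> \<cdot> \<chi> \<cdot> \<phi>) \<cdot> \<chi>'" using \<phi> c(1-3) c'(1-3) by simp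
  then have \<phi>\<chi>\<phi>\<chi>': "(\<phi> \<cdot> \<chi>) \<cdot> (\<phi> \<cdot> \<chi>') = \<phi> \<cdot> \<chi>'" unfolding c(7) .
  have "\<phi> \<cdot> \<chi> = ((\<phi> \<cdot> \<chi>') \<cdot> (\<phi> \<cdot> \<chi>))\<^sup>\<dagger>" unfolding \<phi>\<chi>'\<phi>\<chi> c(4) ..
  also have "\<dots> = (\<phi> \<cdot> \<chi>)\<^sup>\<dagger> \<cdot> (\<phi> \<cdot> \<chi>')\<^sup>\<dagger>" by (rule star_comp) (use \<phi> c(1-3) c'(1-3) in simp_all)
  also have "\<dots> = \<phi> \<cdot> \<chi>'" unfolding c(4) c'(4) \<phi>\<chi>\<phi>\<chi>' ..
  finally have \<phi>\<chi>: "\<phi> \<cdot> \<chi> = \<phi> \<cdot> \<chi>'" .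
  have "\<chi> = \<chi> \<cdot> \<phi> \<cdot> \<chi>" using c(8) by simp
  also have "\<dots> = \<chi> \<cdot> \<phi> \<cdot> \<chi>'" unfolding \<phi>\<chi> ..
  also have "\<dots> = \<chi> \<cdot> \<phi> \<cdot> \<phi> \<cdot> \<chi>' \<cdot> \<chi>'" using c'(5) by simp
  also have "\<dots> = (\<chi> \<cdot> \<phi> \<cdot> \<phi>) \<cdot> \<chi>' \<cdot> \<chi>'" using \<phi> c(1-3) c'(1-3) by simp
  also have "\<dots> = \<chi>'" unfolding c(6) c'(5) ..
  finally show ?thesis .
qed

lemma core_inverse_eqI:
  assumes "\<phi> \<in> hom C X X" "is_core_inverse C X \<phi> \<chi>"
  shows "core_inverse C X \<phi> = \<chi>"
  unfolding core_inverse_def using assms core_inverse_unique by blast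

lemma core_inverse_mpow:
  assumes "\<phi> \<in> hom C X X" "is_core_inverse C X \<phi> \<chi>"
  shows "mpow C X \<chi> (Suc j) \<cdot> mpow C X \<phi> (Suc j) = \<chi> \<cdot> \<phi>"
    and "mpow C X \<phi> (Suc j) \<cdot> mpow C X \<chi> (Suc j) = \<phi> \<cdot> \<chi>"
proof -
  have \<phi>: "arr \<phi>" "src \<phi> = X" "tgt \<phi> = X" using assms(1) in_homD by auto
  note c = core_inverseD[OF assms]
  note \<phi>\<^sub>S = mpow_Suc_left[OF \<phi>] and \<chi>\<^sub>S = mpow_Suc_left[OF c(1-3)]
  show "mpow C X \<chi> (Suc j) \<cdot> mpow C X \<phi> (Suc j) = \<chi> \<cdot> \<phi>"
  proof (induction j)
    case (Suc j)
    have "\<chi> \<cdot> mpow C X \<phi> (Suc (Suc j)) = (\<chi> \<cdot> \<phi> \<cdot> \<phi>) \<cdot> mpow C X \<phi> j"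
      unfolding \<phi>\<^sub>S using \<phi> c(1-3) by simp
    also have "\<dots> = mpow C X \<phi> (Suc j)" unfolding c(6) \<phi>\<^sub>S ..
    finally have "\<chi> \<cdot> mpow C X \<phi> (Suc (Suc j)) = mpow C X \<phi> (Suc j)" .
    then show ?case using Suc.IH \<phi> c(1-3) by simp
  qed (use \<phi> c in simp)
  show "mpow C X \<phi> (Suc j) \<cdot> mpow C X \<chi> (Suc j) = \<phi> \<cdot> \<chi>"
  proof (induction j)
    case (Suc j)
    have "mpow C X \<phi> (Suc (Suc j)) \<cdot> mpow C X \<chi> (Suc (Suc j))
        = \<phi> \<cdot> (mpow C X \<phi> (Suc j) \<cdot> mpow C X \<chi> (Suc j)) \<cdot> \<chi>"
      unfolding \<phi>\<^sub>S[of "Suc j"] using \<phi> c(1-3) by simp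
    also have "\<dots> = \<phi> \<cdot> (\<phi> \<cdot> \<chi>) \<cdot> \<chi>" unfolding Suc.IH ..
    also have "\<dots> = \<phi> \<cdot> \<chi>" using \<phi> c by simp
    finally show ?case .
  qed (use \<phi> c in simp)
qed

end

(* \<gamma> need not be a cokernel: it suffices that it annihilates \<phi> and that \<kappa>\<gamma> is right invertible. *)
locale kernel_and_annihilator = preadditive_involution +
  fixes X K L \<phi> \<kappa> \<gamma> s
  assumes phi: "\<phi> \<in> hom C X X"
    and kernel: "is_kernel C X X \<phi> K \<kappa>"
    and gamma: "\<gamma> \<in> hom C X L"
    and phi_gamma [simp]: "comp C \<phi> \<gamma> = zero_m C X L"
    and s: "s \<in> hom C L K"
    and kappa_gamma_s [simp]: "comp C \<kappa> (comp C \<gamma> s) = ident C K"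
begin

lemma arrs [simp]:
  "arr \<phi>" "src \<phi> = X" "tgt \<phi> = X" "arr \<kappa>" "src \<kappa> = K" "tgt \<kappa> = X"
  "arr \<gamma>" "src \<gamma> = X" "tgt \<gamma> = L" "arr s" "src s = L" "tgt s = K"
  using in_homD[OF phi] kernelD[OF kernel] in_homD[OF gamma] in_homD[OF s] by auto

lemma objs [simp]: "X \<in> obj C" "K \<in> obj C" "L \<in> obj C"
  using arr_objects arrs by metis+

lemma kappa_phi [simp]: "\<kappa> \<cdot> \<phi> = zero_m C K X"
  using kernelD[OF kernel] by simp

lemma cancel_phi_gamma:
  assumes "arr \<alpha>" "arr \<beta>" "src \<alpha> = src \<beta>" "tgt \<alpha> = X" "tgt \<beta> = X"
    and "\<alpha> \<cdot> \<phi> = \<beta> \<cdot> \<phi>" "\<alpha> \<cdot> \<gamma> = \<beta> \<cdot> \<gamma>"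
  shows "\<alpha> = \<beta>"
proof (rule diff_zero_imp_eq)
  let ?d = "\<alpha> \<ominus> \<beta>"
  have d: "arr ?d" "src ?d = src \<alpha>" "tgt ?d = X" using assms(1-5) by simp_all
  have "?d \<cdot> \<phi> = zero_m C (src ?d) X" using assms by simp
  then obtain w where w: "arr w" "src w = src \<alpha>" "tgt w = K" and dw: "?d = w \<cdot> \<kappa>"
    using kernel_factor[OF kernel d(1,3)] d(2) by metis
  have "w \<cdot> \<kappa> \<cdot> \<gamma> = ?d \<cdot> \<gamma>" using w unfolding dw by simp
  also have "\<dots> = zero_m C (src \<alpha>) L" using assms by simp
  finally have "w \<cdot> \<kappa> \<cdot> \<gamma> = zero_m C (src \<alpha>) L" .
  moreover have "w = (w \<cdot> \<kappa> \<cdot> \<gamma>) \<cdot> s" using w by simp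
  ultimately have "w = zero_m C (src \<alpha>) L \<cdot> s" by simp
  then show "?d = zero_m C (src \<beta>) (tgt \<beta>)" using w assms unfolding dw by simp
qed (use assms in simp_all)

lemma cancel_mpow_gamma:
  assumes "arr \<alpha>" "arr \<beta>" "src \<alpha> = src \<beta>" "tgt \<alpha> = X" "tgt \<beta> = X"
    and "\<alpha> \<cdot> mpow C X \<phi> (Suc j) = \<beta> \<cdot> mpow C X \<phi> (Suc j)" "\<alpha> \<cdot> \<gamma> = \<beta> \<cdot> \<gamma>"
  shows "\<alpha> = \<beta>"
  using assms
proof (induction j arbitrary: \<alpha> \<beta>)
  case 0
  then have "\<alpha> \<cdot> \<phi> = \<beta> \<cdot> \<phi>" by simp
  then show ?case by (rule cancel_phi_gamma[rotated 5]) (use "0.prems" in simp_all)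
next
  case (Suc j)
  have "mpow C X \<phi> (Suc (Suc j)) = \<phi> \<cdot> mpow C X \<phi> (Suc j)" by (rule mpow_Suc_left) simp_all
  then have "(\<alpha> \<cdot> \<phi>) \<cdot> mpow C X \<phi> (Suc j) = (\<beta> \<cdot> \<phi>) \<cdot> mpow C X \<phi> (Suc j)"
    using Suc.prems(1-6) by (simp del: mpow.simps)
  moreover have "(\<alpha> \<cdot> \<phi>) \<cdot> \<gamma> = (\<beta> \<cdot> \<phi>) \<cdot> \<gamma>" using Suc.prems by simp
  ultimately have "\<alpha> \<cdot> \<phi> = \<beta> \<cdot> \<phi>"
    by (rule Suc.IH[rotated 5]) (use Suc.prems(1-5) in simp_all)
  then show ?case by (rule cancel_phi_gamma[rotated 5]) (use Suc.prems in simp_all)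
qed

end

locale core_inverse_construction = kernel_and_annihilator +
  fixes m v
  assumes m: "m \<ge> 1"
    and v: "is_inverse C X X
      (plus_m C (comp C (star_m C \<phi>) (mpow C X \<phi> (Suc m))) (comp C (star_m C \<kappa>) \<kappa>)) v"
begin

definition chi where "chi = (mpow C X \<phi> m \<cdot> v) \<cdot> \<phi>\<^sup>\<dagger>"

lemma v_arr [simp]: "arr v" "src v = X" "tgt v = X"
  using v in_homD unfolding is_inverse_def by auto

lemma v_inverse [simp]:
  "v \<cdot> (\<phi>\<^sup>\<dagger> \<cdot> mpow C X \<phi> m \<cdot> \<phi> \<oplus> \<kappa>\<^sup>\<dagger> \<cdot> \<kappa>) = ident C X"
  "(\<phi>\<^sup>\<dagger> \<cdot> mpow C X \<phi> m \<cdot> \<phi> \<oplus> \<kappa>\<^sup>\<dagger> \<cdot> \<kappa>) \<cdot> v = ident C X"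
  using v unfolding is_inverse_def by auto

lemma phi_mpow_commute: "\<phi> \<cdot> mpow C X \<phi> m = mpow C X \<phi> m \<cdot> \<phi>"
  by (rule mpow_commute) simp_all

lemma phi_mpow_commute_reassoc:
  "arr x \<Longrightarrow> src x = X \<Longrightarrow> \<phi> \<cdot> mpow C X \<phi> m \<cdot> x = mpow C X \<phi> m \<cdot> \<phi> \<cdot> x"
  using comp_reassoc[OF phi_mpow_commute, of x] by simp

lemma v_kappa_star: "v \<cdot> \<kappa>\<^sup>\<dagger> = \<gamma> \<cdot> s"
proof -
  have "\<gamma> = (v \<cdot> (\<phi>\<^sup>\<dagger> \<cdot> mpow C X \<phi> m \<cdot> \<phi> \<oplus> \<kappa>\<^sup>\<dagger> \<cdot> \<kappa>)) \<cdot> \<gamma>" by simp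
  also have "\<dots> = v \<cdot> \<kappa>\<^sup>\<dagger> \<cdot> \<kappa> \<cdot> \<gamma>" by (simp del: v_inverse)
  finally have "v \<cdot> \<kappa>\<^sup>\<dagger> \<cdot> \<kappa> \<cdot> \<gamma> = \<gamma>" by (rule sym)
  moreover have "v \<cdot> \<kappa>\<^sup>\<dagger> = (v \<cdot> \<kappa>\<^sup>\<dagger> \<cdot> \<kappa> \<cdot> \<gamma>) \<cdot> s" by simp
  ultimately show ?thesis by simp
qed

lemma v_phi_star_mpow: "v \<cdot> \<phi>\<^sup>\<dagger> \<cdot> mpow C X \<phi> m \<cdot> \<phi> \<cdot> \<phi> = \<phi>"
proof -
  have "\<phi> = (v \<cdot> (\<phi>\<^sup>\<dagger> \<cdot> mpow C X \<phi> m \<cdot> \<phi> \<oplus> \<kappa>\<^sup>\<dagger> \<cdot> \<kappa>)) \<cdot> \<phi>" by simp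
  also have "\<dots> = v \<cdot> \<phi>\<^sup>\<dagger> \<cdot> mpow C X \<phi> m \<cdot> \<phi> \<cdot> \<phi>" by (simp del: v_inverse)
  finally show ?thesis by (rule sym)
qed

lemma phi_v_phi_star_mpow: "\<phi> \<cdot> v \<cdot> \<phi>\<^sup>\<dagger> \<cdot> mpow C X \<phi> m \<cdot> \<phi> = \<phi>"
proof -
  have \<phi>\<gamma>: "\<phi> \<cdot> \<gamma> \<cdot> x = zero_m C X (tgt x)" if "arr x" "src x = L" for x
    using comp_reassoc[OF phi_gamma] that by simp
  have v\<kappa>: "v \<cdot> \<kappa>\<^sup>\<dagger> \<cdot> x = \<gamma> \<cdot> s \<cdot> x" if "arr x" "src x = K" for x
    using comp_reassoc[OF v_kappa_star] that by simp
  have "\<phi> = \<phi> \<cdot> v \<cdot> (\<phi>\<^sup>\<dagger> \<cdot> mpow C X \<phi> m \<cdot> \<phi> \<oplus> \<kappa>\<^sup>\<dagger> \<cdot> \<kappa>)" by simp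
  also have "\<dots> = \<phi> \<cdot> v \<cdot> \<phi>\<^sup>\<dagger> \<cdot> mpow C X \<phi> m \<cdot> \<phi>" by (simp del: v_inverse add: \<phi>\<gamma> v\<kappa>)
  finally show ?thesis by (rule sym)
qed

lemma cancel_mpow_m_gamma:
  assumes "arr \<alpha>" "arr \<beta>" "src \<alpha> = src \<beta>" "tgt \<alpha> = X" "tgt \<beta> = X"
    and "\<alpha> \<cdot> mpow C X \<phi> m = \<beta> \<cdot> mpow C X \<phi> m" "\<alpha> \<cdot> \<gamma> = \<beta> \<cdot> \<gamma>"
  shows "\<alpha> = \<beta>"
proof -
  obtain j where "m = Suc j" using m by (cases m) simp_all
  then show ?thesis using cancel_mpow_gamma[OF assms(1-5) _ assms(7)] assms(6) by blast
qed

lemma chi_arr [simp]: "arr chi" "src chi = X" "tgt chi = X"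
  unfolding chi_def by simp_all

lemma phi_chi_phi: "\<phi> \<cdot> chi \<cdot> \<phi> = \<phi>"
proof -
  have "(\<phi> \<cdot> chi \<cdot> \<phi>) \<cdot> mpow C X \<phi> m = mpow C X \<phi> m \<cdot> \<phi> \<cdot> v \<cdot> \<phi>\<^sup>\<dagger> \<cdot> \<phi> \<cdot> mpow C X \<phi> m"
    unfolding chi_def by (simp add: phi_mpow_commute_reassoc)
  also have "\<dots> = mpow C X \<phi> m \<cdot> \<phi>"
    using phi_v_phi_star_mpow by (simp add: phi_mpow_commute)
  also have "\<dots> = \<phi> \<cdot> mpow C X \<phi> m" by (rule phi_mpow_commute[symmetric])
  finally have "(\<phi> \<cdot> chi \<cdot> \<phi>) \<cdot> mpow C X \<phi> m = \<phi> \<cdot> mpow C X \<phi> m" .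
  moreover have "(\<phi> \<cdot> chi \<cdot> \<phi>) \<cdot> \<gamma> = \<phi> \<cdot> \<gamma>" unfolding chi_def by simp
  ultimately show ?thesis by (rule cancel_mpow_m_gamma[rotated 5]) simp_all
qed

lemma phi_chi_hermitian: "(\<phi> \<cdot> chi)\<^sup>\<dagger> = \<phi> \<cdot> chi"
proof -
  have "\<phi>\<^sup>\<dagger> \<cdot> (\<phi> \<cdot> chi)\<^sup>\<dagger> = ((\<phi> \<cdot> chi) \<cdot> \<phi>)\<^sup>\<dagger>" by simp
  also have "\<dots> = \<phi>\<^sup>\<dagger>" using phi_chi_phi by simp
  finally have \<phi>\<chi>: "\<phi>\<^sup>\<dagger> \<cdot> (\<phi> \<cdot> chi)\<^sup>\<dagger> = \<phi>\<^sup>\<dagger>" .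
  have "(\<phi> \<cdot> chi) \<cdot> (\<phi> \<cdot> chi)\<^sup>\<dagger> = \<phi> \<cdot> mpow C X \<phi> m \<cdot> v \<cdot> \<phi>\<^sup>\<dagger> \<cdot> (\<phi> \<cdot> chi)\<^sup>\<dagger>"
    unfolding chi_def by simp
  also have "\<dots> = \<phi> \<cdot> chi" unfolding \<phi>\<chi> by (simp add: chi_def)
  finally have idem: "(\<phi> \<cdot> chi) \<cdot> (\<phi> \<cdot> chi)\<^sup>\<dagger> = \<phi> \<cdot> chi" .
  have "(\<phi> \<cdot> chi)\<^sup>\<dagger> = ((\<phi> \<cdot> chi) \<cdot> (\<phi> \<cdot> chi)\<^sup>\<dagger>)\<^sup>\<dagger>" unfolding idem ..
  also have "\<dots> = (\<phi> \<cdot> chi) \<cdot> (\<phi> \<cdot> chi)\<^sup>\<dagger>" by (rule star_comp[THEN trans]) simp_all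
  finally show ?thesis unfolding idem .
qed

lemma phi_chi_chi: "\<phi> \<cdot> chi \<cdot> chi = chi"
proof -
  obtain j where j: "m = Suc j" using m by (cases m) simp_all
  have p: "mpow C X \<phi> m = \<phi> \<cdot> mpow C X \<phi> j" unfolding j by (rule mpow_Suc_left) simp_all
  have "(\<phi> \<cdot> chi) \<cdot> mpow C X \<phi> m = (\<phi> \<cdot> chi \<cdot> \<phi>) \<cdot> mpow C X \<phi> j" unfolding p by simp
  also have "\<dots> = mpow C X \<phi> m" unfolding phi_chi_phi p ..
  finally have \<phi>\<chi>p: "(\<phi> \<cdot> chi) \<cdot> mpow C X \<phi> m = mpow C X \<phi> m" .
  have "\<phi> \<cdot> chi \<cdot> chi = ((\<phi> \<cdot> chi) \<cdot> mpow C X \<phi> m) \<cdot> v \<cdot> \<phi>\<^sup>\<dagger>" by (simp add: chi_def)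
  also have "\<dots> = chi" unfolding \<phi>\<chi>p by (simp add: chi_def)
  finally show ?thesis .
qed

lemma chi_phi_phi: "chi \<cdot> \<phi> \<cdot> \<phi> = \<phi>"
proof -
  have "(chi \<cdot> \<phi> \<cdot> \<phi>) \<cdot> mpow C X \<phi> m = mpow C X \<phi> m \<cdot> v \<cdot> \<phi>\<^sup>\<dagger> \<cdot> mpow C X \<phi> m \<cdot> \<phi> \<cdot> \<phi>"
    unfolding chi_def by (simp add: phi_mpow_commute phi_mpow_commute_reassoc)
  also have "\<dots> = mpow C X \<phi> m \<cdot> \<phi>" unfolding v_phi_star_mpow ..
  also have "\<dots> = \<phi> \<cdot> mpow C X \<phi> m" by (rule phi_mpow_commute[symmetric])
  finally have "(chi \<cdot> \<phi> \<cdot> \<phi>) \<cdot> mpow C X \<phi> m = \<phi> \<cdot> mpow C X \<phi> m" .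
  moreover have "(chi \<cdot> \<phi> \<cdot> \<phi>) \<cdot> \<gamma> = \<phi> \<cdot> \<gamma>" unfolding chi_def by simp
  ultimately show ?thesis by (rule cancel_mpow_m_gamma[rotated 5]) simp_all
qed

lemma chi_core_inverse: "is_core_inverse C X \<phi> chi"
  unfolding is_core_inverse_def
  using arr_in_hom[of chi] phi_chi_hermitian phi_chi_chi chi_phi_phi by simp

end


locale core_invertible = preadditive_involution +
  fixes X K \<phi> \<kappa> \<chi>
  assumes phi: "\<phi> \<in> hom C X X"
    and kernel: "is_kernel C X X \<phi> K \<kappa>"
    and core: "is_core_inverse C X \<phi> \<chi>"
begin

lemma arrs [simp]:
  "arr \<phi>" "src \<phi> = X" "tgt \<phi> = X" "arr \<kappa>" "src \<kappa> = K" "tgt \<kappa> = X"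
  "arr \<chi>" "src \<chi> = X" "tgt \<chi> = X"
  using in_homD[OF phi] kernelD[OF kernel] core_inverseD[OF phi core] by auto

lemma objs [simp]: "X \<in> obj C" "K \<in> obj C"
  using arr_objects arrs by metis+

lemma kappa_phi [simp]: "\<kappa> \<cdot> \<phi> = zero_m C K X"
  using kernelD[OF kernel] by simp

lemmas core_eqs = core_inverseD(4-8)[OF phi core]

lemma kappa_chi [simp]: "\<kappa> \<cdot> \<chi> = zero_m C K X"
proof -
  have "\<kappa> \<cdot> \<chi> = \<kappa> \<cdot> \<phi> \<cdot> \<chi> \<cdot> \<chi>" using core_eqs(2) by simp
  also have "\<dots> = zero_m C K X" by (simp add: comp_reassoc[OF kappa_phi])
  finally show ?thesis .
qed

definition coker where
  "coker = (SOME w. arr w \<and> src w = X \<and> tgt w = K \<and> ident C X \<ominus> \<chi> \<cdot> \<phi> = w \<cdot> \<kappa>)"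

lemma coker_exists:
  "\<exists>w. arr w \<and> src w = X \<and> tgt w = K \<and> ident C X \<ominus> \<chi> \<cdot> \<phi> = w \<cdot> \<kappa>"
proof -
  let ?d = "ident C X \<ominus> \<chi> \<cdot> \<phi>"
  have d: "arr ?d" "src ?d = X" "tgt ?d = X" by simp_all
  have "?d \<cdot> \<phi> = zero_m C (src ?d) X" using core_eqs(3) by simp
  then obtain w where "arr w" "src w = X" "tgt w = K" "?d = w \<cdot> \<kappa>"
    using kernel_factor[OF kernel d(1,3)] d(2) by metis
  then show ?thesis by blast
qed

lemma coker_arr [simp]: "arr coker" "src coker = X" "tgt coker = K"
  and ident_minus_chi_phi: "ident C X \<ominus> \<chi> \<cdot> \<phi> = coker \<cdot> \<kappa>"
  using someI_ex[OF coker_exists] unfolding coker_def[symmetric] by blast+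

lemma kappa_coker [simp]: "\<kappa> \<cdot> coker = ident C K"
proof (rule kernel_cancel[OF kernel phi])
  have "(\<kappa> \<cdot> coker) \<cdot> \<kappa> = \<kappa> \<cdot> (ident C X \<ominus> \<chi> \<cdot> \<phi>)" unfolding ident_minus_chi_phi by simp
  also have "\<dots> = ident C K \<cdot> \<kappa>" by (simp add: comp_reassoc[OF kappa_chi])
  finally show "(\<kappa> \<cdot> coker) \<cdot> \<kappa> = ident C K \<cdot> \<kappa>" .
qed simp_all

lemma phi_coker [simp]: "\<phi> \<cdot> coker = zero_m C X K"
proof (rule kernel_cancel[OF kernel phi])
  have "(\<phi> \<cdot> coker) \<cdot> \<kappa> = \<phi> \<cdot> (ident C X \<ominus> \<chi> \<cdot> \<phi>)" unfolding ident_minus_chi_phi by simp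
  also have "\<dots> = zero_m C X K \<cdot> \<kappa>" using core_eqs(4) by simp
  finally show "(\<phi> \<cdot> coker) \<cdot> \<kappa> = zero_m C X K \<cdot> \<kappa>" .
qed simp_all

lemma chi_phi_plus_coker: "\<chi> \<cdot> \<phi> \<oplus> coker \<cdot> \<kappa> = ident C X"
proof -
  have "\<chi> \<cdot> \<phi> \<oplus> coker \<cdot> \<kappa> = (ident C X \<ominus> \<chi> \<cdot> \<phi>) \<oplus> \<chi> \<cdot> \<phi>"
    unfolding ident_minus_chi_phi by (rule plus_comm) simp_all
  also have "\<dots> = ident C X" by (simp add: plus_assoc)
  finally show ?thesis .
qed

lemma coker_cokernel: "is_cokernel C X X \<phi> K coker"
  unfolding is_cokernel_def
proof (intro conjI ballI impI)
  show "coker \<in> hom C X K" using arr_in_hom[of coker] by simp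
  show "\<phi> \<cdot> coker = zero_m C X K" by simp
  fix M \<beta> assume M: "M \<in> obj C" and \<beta>: "\<beta> \<in> hom C X M" and \<phi>\<beta>: "\<phi> \<cdot> \<beta> = zero_m C X M"
  have [simp]: "arr \<beta>" "src \<beta> = X" "tgt \<beta> = M" using \<beta> in_homD by auto
  show "\<exists>!\<beta>'. \<beta>' \<in> hom C K M \<and> \<beta> = coker \<cdot> \<beta>'"
  proof (rule ex1I[of _ "\<kappa> \<cdot> \<beta>"])
    have "coker \<cdot> \<kappa> \<cdot> \<beta> = (ident C X \<ominus> \<chi> \<cdot> \<phi>) \<cdot> \<beta>" unfolding ident_minus_chi_phi by simp
    also have "\<dots> = \<beta>" using \<phi>\<beta> M by simp
    finally show "\<kappa> \<cdot> \<beta> \<in> hom C K M \<and> \<beta> = coker \<cdot> \<kappa> \<cdot> \<beta>"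
      using arr_in_hom[of "\<kappa> \<cdot> \<beta>"] by simp
  next
    fix \<beta>' assume "\<beta>' \<in> hom C K M \<and> \<beta> = coker \<cdot> \<beta>'"
    then show "\<beta>' = \<kappa> \<cdot> \<beta>" using in_homD by (auto simp: comp_reassoc[OF kappa_coker])
  qed
qed

lemma adjoint_sum_inverse:
  "is_inverse C X X (\<phi>\<^sup>\<dagger> \<cdot> mpow C X \<phi> (Suc m) \<oplus> \<kappa>\<^sup>\<dagger> \<cdot> \<kappa>)
     (mpow C X \<chi> (Suc m) \<cdot> \<chi>\<^sup>\<dagger> \<oplus> coker \<cdot> coker\<^sup>\<dagger>)"
proof -
  define A where "A = mpow C X \<phi> (Suc m)"
  define Y where "Y = mpow C X \<chi> (Suc m)"
  have [simp]: "arr A" "src A = X" "tgt A = X" "arr Y" "src Y = X" "tgt Y = X"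
    unfolding A_def Y_def by simp_all
  have A: "A = \<phi> \<cdot> mpow C X \<phi> m" and Y: "Y = \<chi> \<cdot> mpow C X \<chi> m"
    unfolding A_def Y_def by (rule mpow_Suc_left; simp)+
  have YA: "Y \<cdot> A = \<chi> \<cdot> \<phi>" and AY: "A \<cdot> Y = \<phi> \<cdot> \<chi>"
    unfolding A_def Y_def by (rule core_inverse_mpow[OF phi core])+
  have \<phi>\<chi>A: "\<phi> \<cdot> \<chi> \<cdot> A = A"
    unfolding A by (simp add: comp3_reassoc[OF core_eqs(4)])
  have A_coker: "A \<cdot> coker = zero_m C X K" unfolding A_def by simp
  have \<kappa>Y: "\<kappa> \<cdot> Y = zero_m C K X" unfolding Y by (simp add: comp_reassoc[OF kappa_chi])
  have \<chi>\<phi>_star: "\<chi>\<^sup>\<dagger> \<cdot> \<phi>\<^sup>\<dagger> = \<phi> \<cdot> \<chi>" using core_eqs(1) by simp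
  have \<chi>\<kappa>_star: "\<chi>\<^sup>\<dagger> \<cdot> \<kappa>\<^sup>\<dagger> = zero_m C X K" using star_comp[of \<kappa> \<chi>] by simp
  have coker\<phi>_star: "coker\<^sup>\<dagger> \<cdot> \<phi>\<^sup>\<dagger> = zero_m C K X" using star_comp[of \<phi> coker] by simp
  have coker\<kappa>_star: "coker\<^sup>\<dagger> \<cdot> \<kappa>\<^sup>\<dagger> = ident C K" using star_comp[of \<kappa> coker] by simp
  have \<phi>_star_\<phi>\<chi>: "\<phi>\<^sup>\<dagger> \<cdot> \<phi> \<cdot> \<chi> = \<phi>\<^sup>\<dagger>"
  proof -
    have "\<phi>\<^sup>\<dagger> \<cdot> \<phi> \<cdot> \<chi> = \<phi>\<^sup>\<dagger> \<cdot> (\<phi> \<cdot> \<chi>)\<^sup>\<dagger>" unfolding core_eqs(1) ..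
    also have "\<dots> = (\<phi> \<cdot> \<chi> \<cdot> \<phi>)\<^sup>\<dagger>" by simp
    finally show ?thesis unfolding core_eqs(4) .
  qed
  have sum: "\<phi>\<^sup>\<dagger> \<cdot> \<chi>\<^sup>\<dagger> \<oplus> \<kappa>\<^sup>\<dagger> \<cdot> coker\<^sup>\<dagger> = ident C X"
    using arg_cong[OF chi_phi_plus_coker, of "star_m C"] by simp
  note eqs2 = YA AY A_coker \<kappa>Y \<chi>\<phi>_star \<chi>\<kappa>_star coker\<phi>_star coker\<kappa>_star kappa_coker
  note eqs3 = \<phi>\<chi>A \<phi>_star_\<phi>\<chi>
  show ?thesis
    unfolding is_inverse_def A_def[symmetric] Y_def[symmetric]
    using arr_in_hom[of "\<phi>\<^sup>\<dagger> \<cdot> A \<oplus> \<kappa>\<^sup>\<dagger> \<cdot> \<kappa>"] arr_in_hom[of "Y \<cdot> \<chi>\<^sup>\<dagger> \<oplus> coker \<cdot> coker\<^sup>\<dagger>"]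
    by (simp add: eqs2 eqs3 eqs2[THEN comp_reassoc] eqs3[THEN comp3_reassoc]
        chi_phi_plus_coker sum)
qed

end


context preadditive_involution
begin

lemma core_inverse_of_cokernel:
  assumes phi: "\<phi> \<in> hom C X X" and kernel: "is_kernel C X X \<phi> K \<kappa>"
    and cokernel: "is_cokernel C X X \<phi> L \<gamma>" and "invertible C K L (\<kappa> \<cdot> \<gamma>)"
    and "m \<ge> 1" and v: "is_inverse C X X (\<phi>\<^sup>\<dagger> \<cdot> mpow C X \<phi> (Suc m) \<oplus> \<kappa>\<^sup>\<dagger> \<cdot> \<kappa>) v"
  shows "is_core_inverse C X \<phi> ((mpow C X \<phi> m \<cdot> v) \<cdot> \<phi>\<^sup>\<dagger>)"
proof -
  obtain s where s: "is_inverse C K L (\<kappa> \<cdot> \<gamma>) s"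
    using assms(4) unfolding invertible_def by blast
  have \<gamma>: "\<gamma> \<in> hom C X L" "\<phi> \<cdot> \<gamma> = zero_m C X L"
    using cokernel unfolding is_cokernel_def by auto
  have "s \<in> hom C L K" "\<kappa> \<cdot> \<gamma> \<cdot> s = ident C K"
    using s kernelD[OF kernel] in_homD[OF \<gamma>(1)] in_homD unfolding is_inverse_def
    by (auto simp del: comp_ident)
  then interpret core_inverse_construction C X K L \<phi> \<kappa> \<gamma> s m v
    using phi kernel \<gamma> assms(5) v by unfold_locales
  show ?thesis using chi_core_inverse unfolding chi_def .
qed

lemma cokernel_of_core_inverse:
  assumes "\<phi> \<in> hom C X X" "is_kernel C X X \<phi> K \<kappa>" "is_core_inverse C X \<phi> \<chi>"
  shows "\<exists>L\<in>obj C. \<exists>\<gamma>. is_cokernel C X X \<phi> L \<gamma> \<and> invertible C K L (\<kappa> \<cdot> \<gamma>) \<and>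
    invertible C X X (\<phi>\<^sup>\<dagger> \<cdot> mpow C X \<phi> (Suc m) \<oplus> \<kappa>\<^sup>\<dagger> \<cdot> \<kappa>)"
proof -
  interpret core_invertible C X K \<phi> \<kappa> \<chi> using assms by unfold_locales
  have "invertible C K K (\<kappa> \<cdot> coker)"
    unfolding invertible_def is_inverse_def using arr_in_hom[of "ident C K"] by auto
  moreover have "invertible C X X (\<phi>\<^sup>\<dagger> \<cdot> mpow C X \<phi> (Suc m) \<oplus> \<kappa>\<^sup>\<dagger> \<cdot> \<kappa>)"
    using adjoint_sum_inverse unfolding invertible_def by blast
  ultimately show ?thesis using coker_cokernel objs(2) by blast
qed

end

theorem mainTheorem3:
  fixes C :: "('o, 'm) invcat" and n :: nat and X K :: 'o and \<phi> \<kappa> :: 'm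
  assumes "is_additive_invcat C"
    and "n \<ge> 3"
    and "X \<in> obj C" and "\<phi> \<in> hom C X X"
    and "K \<in> obj C" and "is_kernel C X X \<phi> K \<kappa>"
  shows "(has_core_inverse C X \<phi> \<longleftrightarrow>
           (\<exists>L\<in>obj C. \<exists>lm. is_cokernel C X X \<phi> L lm \<and>
              invertible C K L (comp C \<kappa> lm) \<and>
              invertible C X X (plus_m C (comp C (star_m C \<phi>) (mpow C X \<phi> n))
                                         (comp C (star_m C \<kappa>) \<kappa>))))
       \<and> (has_core_inverse C X \<phi> \<longrightarrow>
           core_inverse C X \<phi> =
             comp C (comp C (mpow C X \<phi> (n - 1))
                            (inverse_m C X X (plus_m C (comp C (star_m C \<phi>) (mpow C X \<phi> n))
                                                       (comp C (star_m C \<kappa>) \<kappa>))))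
                    (star_m C \<phi>))"
proof -
  interpret preadditive_involution C
    using additive_invcat_preadditive_involution[OF assms(1)] .
  define m where "m = n - 1"
  have n: "n = Suc m" "m \<ge> 1" using assms(2) unfolding m_def by auto
  let ?u = "\<phi>\<^sup>\<dagger> \<cdot> mpow C X \<phi> n \<oplus> \<kappa>\<^sup>\<dagger> \<cdot> \<kappa>"
  let ?\<chi> = "(mpow C X \<phi> (n - 1) \<cdot> inverse_m C X X ?u) \<cdot> \<phi>\<^sup>\<dagger>"
  have core: "is_core_inverse C X \<phi> ?\<chi>"
    if cokernel: "is_cokernel C X X \<phi> L \<gamma>" "invertible C K L (\<kappa> \<cdot> \<gamma>)"
      and u: "invertible C X X ?u" for L \<gamma>
  proof -
    obtain v where v: "is_inverse C X X ?u v" using u unfolding invertible_def by blast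
    have "inverse_m C X X ?u = v" using v by (rule inverse_m_eqI)
    then show ?thesis
      using core_inverse_of_cokernel[OF assms(4,6) cokernel n(2), folded n(1), OF v]
      unfolding m_def[symmetric] by simp
  qed
  have cokernel_exists: "\<exists>L\<in>obj C. \<exists>\<gamma>. is_cokernel C X X \<phi> L \<gamma> \<and>
      invertible C K L (\<kappa> \<cdot> \<gamma>) \<and> invertible C X X ?u"
    if "has_core_inverse C X \<phi>"
    using that cokernel_of_core_inverse[OF assms(4,6), where m = m, folded n(1)]
    unfolding has_core_inverse_def by blast
  show ?thesis
    using core cokernel_exists core_inverse_eqI[OF assms(4)] unfolding has_core_inverse_def by blast
qed

end
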